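(* Let $\mathbf A\in\mathbb H^{m\times n}$ and $t\in\mathbb R$. Then for all $i=1,\dots,n$ and $j=1,\dots,m$, \[ \operatorname{cdet}_i\big((t\mathbf I+\mathbf A^{*}\mathbf A)_{.i}(\mathbf a^{*}_{.j})\big)=c_1^{(ij)}t^{n-1}+c_2^{(ij)}t^{n-2}+\dots+c_n^{(ij)}, \] where $c_n^{(ij)}=\operatorname{cdet}_i\big((\mathbf A^{*}\mathbf A)_{.i}(\mathbf a^{*}_{.j})\big)$ and $c_k^{(ij)}=\sum_{\beta\in J_{k,n}\{i\}}\operatorname{cdet}_i\Big(\big((\mathbf A^{*}\mathbf A)_{.i}(\mathbf a^{*}_{.j})\big)^{\beta}_{\beta}\Big)$ for $k=1,\dots,n-1$.
   Context: $\mathbb H$ is the quaternion skew field, $\mathbf A^*$ the conjugate transpose, $\mathbf a^*_{.j}$ the $j$th column of $\mathbf A^*$; $\mathbf M_{.i}(\mathbf b)$ is $\mathbf M$ with its $i$th column replaced by $\mathbf b$. Column determinant of $\mathbf M=(m_{ij})\in\mathbb H^{n\times n}$: $\operatorname{cdet}_j\mathbf M=\sum_{\tau\in S_n}(-1)^{n-r}m_{j_{k_r}j_{k_r+l_r}}\cdots m_{j_{k_r+1}j_{k_r}}\cdots m_{j\,j_{k_1+l_1}}\cdots m_{j_{k_1+1}j_{k_1}}m_{j_{k_1}j}$, where $\tau=(j_{k_r+l_r}\dots j_{k_r+1}j_{k_r})\cdots(j_{k_2+l_2}\dots j_{k_2})(j_{k_1+l_1}\dots j_{k_1+1}j_{k_1}\,j)$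 is the decomposition of $\tau$ into $r$ disjoint cycles (fixed points included), the rightmost cycle ending with $j$, each other cycle ending on the right with its smallest element, and $j_{k_2}<\dots<j_{k_r}$. $L_{k,n}$ is the set of strictly increasing $k$-sequences from $\{1,\dots,n\}$ and $J_{k,n}\{i\}=\{\beta\in L_{k,n}: i\in\beta\}$. $\mathbf N^{\beta}_{\beta}$ is the principal submatrix of $\mathbf N$ with rows and columns indexed by $\beta$; in $\operatorname{cdet}_i(\mathbf N^\beta_\beta)$ the subscript $i$ refers to the column of the submatrix coming from column $i$ of $\mathbf N$. *)

theory Defs
  imports Complex_Main "HOL-Combinatorics.Permutations"
begin

datatype quat = Quat (qRe: real) (qI: real) (qJ: real) (qK: real)

lemma quat_eqI: "qRe x = qRe y \<Longrightarrow> qI x = qI y \<Longrightarrow> qJ x = qJ y \<Longrightarrow> qK x = qK y \<Longrightarrow> x = y"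
  by (cases x, cases y) simp

instantiation quat :: ring_1
begin
definition "0 = Quat 0 0 0 0"
definition "1 = Quat 1 0 0 0"
definition "x + y = Quat (qRe x + qRe y) (qI x + qI y) (qJ x + qJ y) (qK x + qK y)"
definition "x - y = Quat (qRe x - qRe y) (qI x - qI y) (qJ x - qJ y) (qK x - qK y)"
definition "- x = Quat (- qRe x) (- qI x) (- qJ x) (- qK x)"
definition "x * y = Quat
   (qRe x * qRe y - qI x * qI y - qJ x * qJ y - qK x * qK y)
   (qRe x * qI y + qI x * qRe y + qJ x * qK y - qK x * qJ y)
   (qRe x * qJ y - qI x * qK y + qJ x * qRe y + qK x * qI y)
   (qRe x * qK y + qI x * qJ y - qJ x * qI y + qK x * qRe y)"
instance
  by standard (auto intro!: quat_eqI simp: zero_quat_def one_quat_def plus_quat_def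
      minus_quat_def uminus_quat_def times_quat_def algebra_simps)
end

definition qcnj :: "quat \<Rightarrow> quat" where
  "qcnj x = Quat (qRe x) (- qI x) (- qJ x) (- qK x)"

definition qreal :: "real \<Rightarrow> quat" where
  "qreal t = Quat t 0 0 0"

text \<open>Matrices are functions \<open>nat \<Rightarrow> nat \<Rightarrow> quat\<close>; an m\<times>n matrix uses
  row indices 1..m and column indices 1..n.\<close>

type_synonym qmat = "nat \<Rightarrow> nat \<Rightarrow> quat"

definition conj_transpose :: "qmat \<Rightarrow> qmat" where
  "conj_transpose A = (\<lambda>p q. qcnj (A q p))"

definition qmat_mult :: "nat \<Rightarrow> qmat \<Rightarrow> qmat \<Rightarrow> qmat" where
  "qmat_mult m A B = (\<lambda>p q. \<Sum>r = 1..m. A p r * B r q)"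

definition qmat_id :: qmat where
  "qmat_id = (\<lambda>p q. if p = q then 1 else 0)"

definition qmat_add :: "qmat \<Rightarrow> qmat \<Rightarrow> qmat" where
  "qmat_add A B = (\<lambda>p q. A p q + B p q)"

definition qmat_scale :: "real \<Rightarrow> qmat \<Rightarrow> qmat" where
  "qmat_scale t A = (\<lambda>p q. qreal t * A p q)"

definition col :: "qmat \<Rightarrow> nat \<Rightarrow> (nat \<Rightarrow> quat)" where
  "col A j = (\<lambda>p. A p j)"

text \<open>\<open>col_repl M i b\<close> = \<open>M_{.i}(b)\<close>: column i replaced by b.\<close>
definition col_repl :: "qmat \<Rightarrow> nat \<Rightarrow> (nat \<Rightarrow> quat) \<Rightarrow> qmat" where
  "col_repl M i b = (\<lambda>p q. if q = i then b p else M p q)"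

definition cyc_orbit :: "(nat \<Rightarrow> nat) \<Rightarrow> nat \<Rightarrow> nat set" where
  "cyc_orbit \<tau> s = {(\<tau> ^^ k) s | k. True}"

definition cyc_len :: "(nat \<Rightarrow> nat) \<Rightarrow> nat \<Rightarrow> nat" where
  "cyc_len \<tau> s = (LEAST k. 0 < k \<and> (\<tau> ^^ k) s = s)"

definition cyc_prod :: "qmat \<Rightarrow> (nat \<Rightarrow> nat) \<Rightarrow> nat \<Rightarrow> quat" where
  "cyc_prod M \<tau> s =
     prod_list (map (\<lambda>k. M ((\<tau> ^^ k) s) ((\<tau> ^^ Suc k) s)) [0..<cyc_len \<tau> s])"

definition cyc_leaders :: "nat set \<Rightarrow> nat \<Rightarrow> (nat \<Rightarrow> nat) \<Rightarrow> nat set" where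
  "cyc_leaders S j \<tau> = {s \<in> S. j \<notin> cyc_orbit \<tau> s \<and> s = Min (cyc_orbit \<tau> s)}"

text \<open>Monomial of \<open>\<tau>\<close>: cycles with leaders \<open>j_{k_r} > \<dots> > j_{k_2}\<close> from left to
  right, then the cycle of j (starting at row j, ending at column j) on the right.\<close>
definition cdet_monomial :: "nat set \<Rightarrow> nat \<Rightarrow> qmat \<Rightarrow> (nat \<Rightarrow> nat) \<Rightarrow> quat" where
  "cdet_monomial S j M \<tau> =
     prod_list (map (cyc_prod M \<tau>) (rev (sorted_list_of_set (cyc_leaders S j \<tau>))))
     * cyc_prod M \<tau> j"

text \<open>\<open>cdet_on S j M\<close>: the column determinant \<open>cdet_j\<close> of the principal submatrix
  of M with rows and columns indexed by the finite set S (in increasing order),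
  j being (the column coming from) column j of M. r = number of cycles
  (fixed points included) = card of leaders + 1.\<close>
definition cdet_on :: "nat set \<Rightarrow> nat \<Rightarrow> qmat \<Rightarrow> quat" where
  "cdet_on S j M = (\<Sum>\<tau> \<in> {\<tau>. \<tau> permutes S}.
      (- 1) ^ (card S - (card (cyc_leaders S j \<tau>) + 1)) * cdet_monomial S j M \<tau>)"

definition cdet :: "nat \<Rightarrow> nat \<Rightarrow> qmat \<Rightarrow> quat" where
  "cdet n j M = cdet_on {1..n} j M"

text \<open>\<open>J_{k,n}{i}\<close>, strictly increasing k-sequences identified with k-subsets.\<close>
definition Jset :: "nat \<Rightarrow> nat \<Rightarrow> nat \<Rightarrow> nat set set" where
  "Jset k n i = {\<beta>. \<beta> \<subseteq> {1..n} \<and> card \<beta> = k \<and> i \<in> \<beta>}"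

end

theory Submission
  imports Defs
begin

text \<open>Write \<open>M = (A\<^sup>*A)\<^sub>.\<^sub>i(a\<^sup>*\<^sub>.\<^sub>j)\<close>. Then \<open>(tI + A\<^sup>*A)\<^sub>.\<^sub>i(a\<^sup>*\<^sub>.\<^sub>j)\<close> is \<open>M\<close> with the
  real, hence central, scalar \<open>t\<close> added to every diagonal entry except the \<open>i\<close>-th. In the
  monomial of a permutation \<open>\<tau>\<close> only the fixed points \<open>p \<noteq> i\<close> see this change: their
  one-element cycle contributes \<open>t + m\<^sub>p\<^sub>p\<close>. Expanding these factors, choosing \<open>t\<close> on a set
  \<open>F\<close> of such fixed points leaves \<open>t\<^bsup>|F|\<^esup>\<close> times the monomial of \<open>\<tau>\<close> viewed as a permutation
  of \<open>\<beta> = {1..n} - F\<close>, with the same sign since the size and the number of cycles both drop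
  by \<open>|F|\<close>. The pairs \<open>(\<tau>, F)\<close> correspond bijectively to the pairs \<open>(\<beta>, \<sigma>)\<close> with
  \<open>i \<in> \<beta>\<close> and \<open>\<sigma>\<close> a permutation of \<open>\<beta>\<close>, so the column determinant is
  \<open>\<Sum>\<^sub>\<beta> cdet\<^sub>i(M\<^sup>\<beta>\<^sub>\<beta>) t\<^bsup>n-|\<beta>|\<^esup>\<close>; grouping by \<open>|\<beta>|\<close> gives the coefficients.\<close>

lemma qreal_mult_commute: "qreal r * y = y * qreal r"
  by (auto intro!: quat_eqI simp: qreal_def times_quat_def)

lemma qreal_power: "qreal r ^ n = qreal (r ^ n)"
  by (induction n) (auto intro!: quat_eqI simp: qreal_def times_quat_def one_quat_def)

lemma prod_list_map_if_add_central:
  fixes c :: "'a::ring_1"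
  assumes central: "\<And>y. c * y = y * c" and "distinct xs"
  shows "prod_list (map (\<lambda>x. if x \<in> P then c + f x else f x) xs)
       = (\<Sum>F\<in>Pow (P \<inter> set xs). c ^ card F * prod_list (map f (filter (\<lambda>x. x \<notin> F) xs)))"
  using assms(2)
proof (induction xs)
  case Nil
  then show ?case by simp
next
  case (Cons x xs)
  define Q where "Q = P \<inter> set xs"
  define R where "R F = prod_list (map f (filter (\<lambda>x. x \<notin> F) xs))" for F
  have "x \<notin> Q" "finite Q" using Cons.prems by (auto simp: Q_def)
  have IH: "prod_list (map (\<lambda>x. if x \<in> P then c + f x else f x) xs) = (\<Sum>F\<in>Pow Q. c ^ card F * R F)"
    using Cons by (simp add: Q_def R_def)
  have keep_x: "(\<Sum>F\<in>Pow Q. c ^ card F * prod_list (map f (filter (\<lambda>y. y \<notin> F) (x # xs))))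
      = f x * (\<Sum>F\<in>Pow Q. c ^ card F * R F)"
    using \<open>x \<notin> Q\<close> by (auto simp: R_def sum_distrib_left mult.assoc[symmetric]
        power_commuting_commutes[OF central] intro!: sum.cong)
  show ?case
  proof (cases "x \<in> P")
    case True
    have "(\<Sum>F\<in>insert x ` Pow Q. c ^ card F * prod_list (map f (filter (\<lambda>y. y \<notin> F) (x # xs))))
        = (\<Sum>F\<in>Pow Q. c ^ card (insert x F) * prod_list (map f (filter (\<lambda>y. y \<notin> insert x F) (x # xs))))"
      using \<open>x \<notin> Q\<close> by (subst sum.reindex) (auto intro!: inj_onI)
    also have "\<dots> = c * (\<Sum>F\<in>Pow Q. c ^ card F * R F)"
    proof (unfold sum_distrib_left, rule sum.cong[OF refl])
      fix F assume "F \<in> Pow Q"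
      then have "finite F" "x \<notin> F" "filter (\<lambda>y. y \<noteq> x \<and> y \<notin> F) xs = filter (\<lambda>y. y \<notin> F) xs"
        using \<open>x \<notin> Q\<close> \<open>finite Q\<close> Cons.prems by (auto simp: finite_subset intro: filter_cong)
      then show "c ^ card (insert x F) * prod_list (map f (filter (\<lambda>y. y \<notin> insert x F) (x # xs)))
          = c * (c ^ card F * R F)"
        by (simp add: R_def mult.assoc)
    qed
    finally have drop_x: "(\<Sum>F\<in>insert x ` Pow Q. c ^ card F * prod_list (map f (filter (\<lambda>y. y \<notin> F) (x # xs))))
        = c * (\<Sum>F\<in>Pow Q. c ^ card F * R F)" .
    have PQ: "P \<inter> set (x # xs) = insert x Q" using True by (auto simp: Q_def)
    have "(\<Sum>F\<in>Pow (P \<inter> set (x # xs)). c ^ card F * prod_list (map f (filter (\<lambda>y. y \<notin> F) (x # xs))))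
        = (c + f x) * (\<Sum>F\<in>Pow Q. c ^ card F * R F)"
      unfolding PQ Pow_insert using \<open>x \<notin> Q\<close> \<open>finite Q\<close>
      by (subst sum.union_disjoint) (auto simp only: keep_x drop_x distrib_right add.commute)
    then show ?thesis using True IH by simp
  next
    case False
    then have "P \<inter> set (x # xs) = Q" by (auto simp: Q_def)
    then show ?thesis using False IH keep_x by simp
  qed
qed

lemma funpow_fixpoint: "f x = x \<Longrightarrow> (f ^^ k) x = x"
  by (induction k) auto

lemma funpow_not_fixpoint:
  assumes "inj f" "f x \<noteq> x"
  shows "f ((f ^^ k) x) \<noteq> (f ^^ k) x"
  using assms inj_fn[OF assms(1), of k] by (metis funpow_swap1 injD)

lemma cyc_prod_fixpoint: "\<tau> p = p \<Longrightarrow> cyc_prod M \<tau> p = M p p"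
proof -
  assume "\<tau> p = p"
  then have "cyc_len \<tau> p = 1"
    unfolding cyc_len_def by (intro Least_equality) auto
  with \<open>\<tau> p = p\<close> show ?thesis by (simp add: cyc_prod_def)
qed

lemma cyc_orbit_fixpoint: "\<tau> p = p \<Longrightarrow> cyc_orbit \<tau> p = {p}"
  unfolding cyc_orbit_def using funpow_fixpoint[of \<tau> p] by (auto intro: exI[of _ 0])

lemma cyc_prod_cong:
  assumes "\<And>k. M ((\<tau> ^^ k) s) (\<tau> ((\<tau> ^^ k) s)) = M' ((\<tau> ^^ k) s) (\<tau> ((\<tau> ^^ k) s))"
  shows "cyc_prod M \<tau> s = cyc_prod M' \<tau> s"
  unfolding cyc_prod_def using assms by (intro arg_cong[where f=prod_list] map_cong) auto

lemma cyc_leaders_subset: "cyc_leaders S j \<tau> \<subseteq> S"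
  by (auto simp: cyc_leaders_def)

lemma cyc_leaders_Diff: "cyc_leaders (S - F) j \<tau> = cyc_leaders S j \<tau> - F"
  by (auto simp: cyc_leaders_def)

lemma sorted_list_of_set_Diff:
  "finite L \<Longrightarrow> sorted_list_of_set (L - F) = filter (\<lambda>x. x \<notin> F) (sorted_list_of_set L)"
  by (rule sorted_distinct_set_unique) (auto simp: sorted_wrt_filter)

definition diag_add_except :: "nat \<Rightarrow> quat \<Rightarrow> qmat \<Rightarrow> qmat" where
  "diag_add_except i c M = (\<lambda>p q. if p = q \<and> q \<noteq> i then c + M p q else M p q)"

definition fixpoints_except :: "nat set \<Rightarrow> nat \<Rightarrow> (nat \<Rightarrow> nat) \<Rightarrow> nat set" where
  "fixpoints_except S i \<tau> = {p \<in> S. \<tau> p = p \<and> p \<noteq> i}"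

lemma fixpoints_except_subset_cyc_leaders: "fixpoints_except S i \<tau> \<subseteq> cyc_leaders S i \<tau>"
  by (auto simp: fixpoints_except_def cyc_leaders_def cyc_orbit_fixpoint)

lemma cyc_prod_diag_add_except:
  assumes "\<tau> permutes S"
  shows "cyc_prod (diag_add_except i c M) \<tau> s
       = (if \<tau> s = s \<and> s \<noteq> i then c + cyc_prod M \<tau> s else cyc_prod M \<tau> s)"
proof (cases "\<tau> s = s")
  case True
  then show ?thesis
    by (auto simp: cyc_prod_fixpoint diag_add_except_def funpow_fixpoint intro!: cyc_prod_cong)
next
  case False
  have "cyc_prod (diag_add_except i c M) \<tau> s = cyc_prod M \<tau> s"
    by (rule cyc_prod_cong)
      (use funpow_not_fixpoint[OF permutes_inj[OF assms] False] in \<open>metis diag_add_except_def\<close>)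
  with False show ?thesis by simp
qed

lemma cdet_monomial_Diff:
  assumes "finite S"
  shows "cdet_monomial (S - F) i M \<tau> =
    prod_list (map (cyc_prod M \<tau>) (filter (\<lambda>x. x \<notin> F) (rev (sorted_list_of_set (cyc_leaders S i \<tau>)))))
      * cyc_prod M \<tau> i"
  using finite_subset[OF cyc_leaders_subset assms]
  by (simp add: cdet_monomial_def cyc_leaders_Diff sorted_list_of_set_Diff rev_filter)

lemma cdet_monomial_diag_add_except:
  assumes central: "\<And>y. c * y = y * c" and "\<tau> permutes S" "finite S"
  shows "cdet_monomial S i (diag_add_except i c M) \<tau>
       = (\<Sum>F\<in>Pow (fixpoints_except S i \<tau>). c ^ card F * cdet_monomial (S - F) i M \<tau>)"
proof -
  define xs where "xs = rev (sorted_list_of_set (cyc_leaders S i \<tau>))"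
  have "finite (cyc_leaders S i \<tau>)" by (rule finite_subset[OF cyc_leaders_subset \<open>finite S\<close>])
  then have "set xs = cyc_leaders S i \<tau>" "distinct xs" by (auto simp: xs_def)
  then have fixpoints: "fixpoints_except S i \<tau> \<inter> set xs = fixpoints_except S i \<tau>"
    using fixpoints_except_subset_cyc_leaders by blast
  have "map (cyc_prod (diag_add_except i c M) \<tau>) xs
      = map (\<lambda>x. if x \<in> fixpoints_except S i \<tau> then c + cyc_prod M \<tau> x else cyc_prod M \<tau> x) xs"
    using \<open>set xs = cyc_leaders S i \<tau>\<close> cyc_leaders_subset[of S i \<tau>]
    by (auto simp: fixpoints_except_def cyc_prod_diag_add_except[OF \<open>\<tau> permutes S\<close>])
  moreover have "cyc_prod (diag_add_except i c M) \<tau> i = cyc_prod M \<tau> i"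
    by (simp add: cyc_prod_diag_add_except[OF \<open>\<tau> permutes S\<close>])
  ultimately have "cdet_monomial S i (diag_add_except i c M) \<tau>
      = (\<Sum>F\<in>Pow (fixpoints_except S i \<tau>). c ^ card F * prod_list (map (cyc_prod M \<tau>) (filter (\<lambda>x. x \<notin> F) xs)))
        * cyc_prod M \<tau> i"
    unfolding cdet_monomial_def xs_def[symmetric]
    by (simp only: prod_list_map_if_add_central[OF central \<open>distinct xs\<close>] fixpoints)
  also have "\<dots> = (\<Sum>F\<in>Pow (fixpoints_except S i \<tau>). c ^ card F * cdet_monomial (S - F) i M \<tau>)"
    unfolding cdet_monomial_Diff[OF \<open>finite S\<close>] xs_def by (simp add: sum_distrib_right mult.assoc)
  finally show ?thesis .
qed

definition cdet_sign :: "nat set \<Rightarrow> nat \<Rightarrow> (nat \<Rightarrow> nat) \<Rightarrow> quat" where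
  "cdet_sign S j \<tau> = (- 1) ^ (card S - (card (cyc_leaders S j \<tau>) + 1))"

lemma cdet_on_altdef:
  "cdet_on S j M = (\<Sum>\<tau> | \<tau> permutes S. cdet_sign S j \<tau> * cdet_monomial S j M \<tau>)"
  by (simp add: cdet_on_def cdet_sign_def)

text \<open>Each removed fixed point is a one-element cycle, so the size and the number of cycles drop
  equally.\<close>

lemma cdet_sign_Diff_fixpoints:
  assumes "finite S" "F \<subseteq> fixpoints_except S i \<tau>"
  shows "cdet_sign (S - F) i \<tau> = cdet_sign S i \<tau>"
proof -
  let ?L = "cyc_leaders S i \<tau>"
  have "?L \<subseteq> S" by (rule cyc_leaders_subset)
  then have "finite ?L" using \<open>finite S\<close> by (rule finite_subset)
  have "F \<subseteq> ?L" using assms(2) fixpoints_except_subset_cyc_leaders by (rule subset_trans)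
  then have "finite F" "F \<subseteq> S" using \<open>finite ?L\<close> \<open>?L \<subseteq> S\<close> by (auto intro: finite_subset)
  have "card F \<le> card ?L" "card ?L \<le> card S"
    using card_mono \<open>finite ?L\<close> \<open>F \<subseteq> ?L\<close> \<open>finite S\<close> \<open>?L \<subseteq> S\<close> by blast+
  moreover have "card (S - F) = card S - card F" "card (?L - F) = card ?L - card F"
    using card_Diff_subset \<open>finite F\<close> \<open>F \<subseteq> S\<close> \<open>F \<subseteq> ?L\<close> by blast+
  ultimately show ?thesis
    unfolding cdet_sign_def cyc_leaders_Diff by simp
qed

lemma sum_permutes_Pow_fixpoints_except:
  assumes "finite S" "i \<in> S"
  shows "(\<Sum>\<tau> | \<tau> permutes S. \<Sum>F\<in>Pow (fixpoints_except S i \<tau>). g (S - F) \<tau>)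
       = (\<Sum>\<beta> | \<beta> \<subseteq> S \<and> i \<in> \<beta>. \<Sum>\<sigma> | \<sigma> permutes \<beta>. g \<beta> \<sigma>)"
proof -
  have fixpoints_subset: "fixpoints_except S i \<tau> \<subseteq> S" for \<tau>
    by (auto simp: fixpoints_except_def)
  have "(\<Sum>\<tau> | \<tau> permutes S. \<Sum>F\<in>Pow (fixpoints_except S i \<tau>). g (S - F) \<tau>)
      = (\<Sum>(\<tau>, F)\<in>Sigma {\<tau>. \<tau> permutes S} (\<lambda>\<tau>. Pow (fixpoints_except S i \<tau>)). g (S - F) \<tau>)"
    using assms(1) fixpoints_subset
    by (intro sum.Sigma) (auto intro: finite_permutations finite_subset)
  also have "\<dots> = (\<Sum>(\<beta>, \<sigma>)\<in>Sigma {\<beta>. \<beta> \<subseteq> S \<and> i \<in> \<beta>} (\<lambda>\<beta>. {\<sigma>. \<sigma> permutes \<beta>}). g \<beta> \<sigma>)"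
  proof (rule sum.reindex_bij_witness[where i="\<lambda>(\<beta>, \<sigma>). (\<sigma>, S - \<beta>)" and j="\<lambda>(\<tau>, F). (S - F, \<tau>)"])
    fix a assume "a \<in> Sigma {\<tau>. \<tau> permutes S} (\<lambda>\<tau>. Pow (fixpoints_except S i \<tau>))"
    then obtain \<tau> F where a: "a = (\<tau>, F)" "\<tau> permutes S" "F \<subseteq> fixpoints_except S i \<tau>"
      by auto
    then have "\<tau> permutes S - F" "i \<notin> F" "F \<subseteq> S"
      by (auto simp: fixpoints_except_def intro: permutes_superset)
    then show "(\<lambda>(\<beta>, \<sigma>). (\<sigma>, S - \<beta>)) ((\<lambda>(\<tau>, F). (S - F, \<tau>)) a) = a"
      and "(\<lambda>(\<tau>, F). (S - F, \<tau>)) a \<in> Sigma {\<beta>. \<beta> \<subseteq> S \<and> i \<in> \<beta>} (\<lambda>\<beta>. {\<sigma>. \<sigma> permutes \<beta>})"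
      and "(case (\<lambda>(\<tau>, F). (S - F, \<tau>)) a of (\<beta>, \<sigma>) \<Rightarrow> g \<beta> \<sigma>) = (case a of (\<tau>, F) \<Rightarrow> g (S - F) \<tau>)"
      using a assms(2) by auto
  next
    fix b assume "b \<in> Sigma {\<beta>. \<beta> \<subseteq> S \<and> i \<in> \<beta>} (\<lambda>\<beta>. {\<sigma>. \<sigma> permutes \<beta>})"
    then obtain \<beta> \<sigma> where b: "b = (\<beta>, \<sigma>)" "\<beta> \<subseteq> S" "i \<in> \<beta>" "\<sigma> permutes \<beta>"
      by auto
    then have "\<sigma> permutes S" "S - \<beta> \<subseteq> fixpoints_except S i \<sigma>"
      by (auto simp: fixpoints_except_def permutes_subset permutes_not_in)
    then show "(\<lambda>(\<tau>, F). (S - F, \<tau>)) ((\<lambda>(\<beta>, \<sigma>). (\<sigma>, S - \<beta>)) b) = b"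
      and "(\<lambda>(\<beta>, \<sigma>). (\<sigma>, S - \<beta>)) b \<in> Sigma {\<tau>. \<tau> permutes S} (\<lambda>\<tau>. Pow (fixpoints_except S i \<tau>))"
      using b by auto
  qed
  also have "\<dots> = (\<Sum>\<beta> | \<beta> \<subseteq> S \<and> i \<in> \<beta>. \<Sum>\<sigma> | \<sigma> permutes \<beta>. g \<beta> \<sigma>)"
    using assms(1)
    by (intro sum.Sigma[symmetric]) (auto intro: finite_permutations finite_subset)
  finally show ?thesis .
qed

lemma cdet_on_diag_add_except:
  assumes central: "\<And>y. c * y = y * c" and "finite S" "i \<in> S"
  shows "cdet_on S i (diag_add_except i c M)
       = (\<Sum>\<beta> | \<beta> \<subseteq> S \<and> i \<in> \<beta>. cdet_on \<beta> i M * c ^ (card S - card \<beta>))"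
proof -
  define g where "g \<beta> \<sigma> = cdet_sign \<beta> i \<sigma> * cdet_monomial \<beta> i M \<sigma> * c ^ (card S - card \<beta>)" for \<beta> \<sigma>
  have "cdet_sign S i \<tau> * cdet_monomial S i (diag_add_except i c M) \<tau>
      = (\<Sum>F\<in>Pow (fixpoints_except S i \<tau>). g (S - F) \<tau>)" if "\<tau> permutes S" for \<tau>
  proof -
    have card_Diff: "card S - card (S - F) = card F" if "F \<subseteq> S" for F
      using that \<open>finite S\<close> by (simp add: card_Diff_subset card_mono finite_subset)
    have "c ^ card F * cdet_monomial (S - F) i M \<tau> = cdet_monomial (S - F) i M \<tau> * c ^ (card S - card (S - F))"
      if "F \<subseteq> fixpoints_except S i \<tau>" for F
    proof -
      have "F \<subseteq> S" using that by (auto simp: fixpoints_except_def)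
      then show ?thesis
        by (simp add: card_Diff power_commuting_commutes[OF central])
    qed
    then show ?thesis
      unfolding cdet_monomial_diag_add_except[OF central that \<open>finite S\<close>] sum_distrib_left g_def
      by (intro sum.cong) (auto simp: cdet_sign_Diff_fixpoints[OF \<open>finite S\<close>] mult.assoc)
  qed
  then have "cdet_on S i (diag_add_except i c M)
      = (\<Sum>\<tau> | \<tau> permutes S. \<Sum>F\<in>Pow (fixpoints_except S i \<tau>). g (S - F) \<tau>)"
    by (simp add: cdet_on_altdef)
  also have "\<dots> = (\<Sum>\<beta> | \<beta> \<subseteq> S \<and> i \<in> \<beta>. \<Sum>\<sigma> | \<sigma> permutes \<beta>. g \<beta> \<sigma>)"
    by (rule sum_permutes_Pow_fixpoints_except[OF \<open>finite S\<close> \<open>i \<in> S\<close>])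
  also have "\<dots> = (\<Sum>\<beta> | \<beta> \<subseteq> S \<and> i \<in> \<beta>. cdet_on \<beta> i M * c ^ (card S - card \<beta>))"
    by (simp add: g_def cdet_on_altdef sum_distrib_right)
  finally show ?thesis .
qed

lemma Jset_self: "i \<in> {1..n} \<Longrightarrow> Jset n n i = {{1..n}}"
  using card_subset_eq[OF finite_atLeastAtMost[of 1 n]] by (auto simp: Jset_def)

lemma sum_subsets_containing_by_card:
  "(\<Sum>\<beta> | \<beta> \<subseteq> {1..n} \<and> i \<in> \<beta>. f \<beta>) = (\<Sum>k = 1..n. \<Sum>\<beta>\<in>Jset k n i. f \<beta>)"
proof -
  have "card \<beta> \<in> {1..n}" if "\<beta> \<subseteq> {1..n}" "i \<in> \<beta>" for \<beta>
    using that card_mono[OF _ that(1)] card_gt_0_iff[of \<beta>] finite_subset[OF that(1)]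
    by (auto simp: Suc_le_eq)
  then have "(\<Sum>\<beta> | \<beta> \<subseteq> {1..n} \<and> i \<in> \<beta>. f \<beta>)
      = (\<Sum>k = 1..n. \<Sum>\<beta>\<in>{\<beta> \<in> {\<beta>. \<beta> \<subseteq> {1..n} \<and> i \<in> \<beta>}. card \<beta> = k}. f \<beta>)"
    by (intro sum.group[symmetric]) auto
  also have "\<dots> = (\<Sum>k = 1..n. \<Sum>\<beta>\<in>Jset k n i. f \<beta>)"
    by (intro sum.cong refl arg_cong[where f="sum f"]) (auto simp: Jset_def)
  finally show ?thesis .
qed

lemma col_repl_add_scale_id:
  "col_repl (qmat_add (qmat_scale t qmat_id) N) i b = diag_add_except i (qreal t) (col_repl N i b)"
  by (auto simp: fun_eq_iff col_repl_def qmat_add_def qmat_scale_def qmat_id_def diag_add_except_def)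

theorem lemma4p3:
  fixes A :: qmat and m n i j :: nat and t :: real
  assumes "i \<in> {1..n}" and "j \<in> {1..m}"
  shows "cdet n i (col_repl (qmat_add (qmat_scale t qmat_id)
                     (qmat_mult m (conj_transpose A) A)) i (col (conj_transpose A) j))
       = (\<Sum>k = 1..n.
            (if k = n
             then cdet n i (col_repl (qmat_mult m (conj_transpose A) A) i (col (conj_transpose A) j))
             else (\<Sum>\<beta> \<in> Jset k n i.
                     cdet_on \<beta> i (col_repl (qmat_mult m (conj_transpose A) A) i
                                   (col (conj_transpose A) j))))
            * qreal (t ^ (n - k)))"
proof -
  define M where "M = col_repl (qmat_mult m (conj_transpose A) A) i (col (conj_transpose A) j)"
  have "cdet n i (diag_add_except i (qreal t) M)
      = (\<Sum>\<beta> | \<beta> \<subseteq> {1..n} \<and> i \<in> \<beta>. cdet_on \<beta> i M * qreal t ^ (n - card \<beta>))"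
    unfolding cdet_def using cdet_on_diag_add_except[OF qreal_mult_commute _ assms(1)] by simp
  also have "\<dots> = (\<Sum>k = 1..n. (\<Sum>\<beta>\<in>Jset k n i. cdet_on \<beta> i M) * qreal (t ^ (n - k)))"
    unfolding sum_subsets_containing_by_card
    by (auto simp: Jset_def qreal_power sum_distrib_right intro!: sum.cong)
  also have "\<dots> = (\<Sum>k = 1..n. (if k = n then cdet n i M else \<Sum>\<beta>\<in>Jset k n i. cdet_on \<beta> i M)
      * qreal (t ^ (n - k)))"
    using Jset_self[OF assms(1)] by (auto simp: cdet_def intro!: sum.cong)
  finally show ?thesis
    unfolding M_def col_repl_add_scale_id .
qed

end
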